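(* Let $G$ be a graph and $r\ge4$. Let $\{A,B\}$ be an $r$-local $2$-separation of $G$ with separator $\{a',v\}$ such that $a'v$ is an edge of $G$, and let $\{A',B'\}$ be an $r$-local $2$-separation of $G$ with separator $\{a,v\}$ such that $av$ is an edge of $G$ and $a\ne a'$. Suppose that $a\in A$ and $a'\in A'$, and that $v$ is not an $r$-local cutvertex of $G$. Then $B\cap B'=\{v\}$.
   Context: Ball $B_r(v)$: the subgraph of all vertices and edges on closed walks of length $\le r$ through $v$; $v$ is an $r$-local cutvertex if $B_r(v)-v$ is disconnected. For $X=\{v_0,v_1\}$, $N(X)$ is the set of vertices outside $X$ adjacent to a vertex of $X$; the connectivity graph $C_r(v_0,v_1)$ has vertex set $N(X)$, with $a,b$ adjacent if for some $i\in\{0,1\}$ they lie in the same component of $B_r(v_i)-v_0-v_1$. $X$ is an $r$-local $2$-separator if $C_r(v_0,v_1)$ is disconnected and $d_G(v_0,v_1)\le r/2$. An $r$-local $2$-separation with separator $X$ is a pair $\{A,B\}$ with $A\cap B=X$ an $r$-local 2-separator such that $A\setminus X$ and $B\setminus X$ are nonempty and partition $N(X)$ so that the vertex set of each component of $C_r(v_0,v_1)$ lies in exactly one of them (so $A\cup B=X\cup N(X)$). *)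

theory Defs
  imports Main
begin

definition graph :: "'a set \<Rightarrow> ('a \<Rightarrow> 'a \<Rightarrow> bool) \<Rightarrow> bool" where
  "graph V E \<longleftrightarrow> finite V \<and> (\<forall>x y. E x y \<longrightarrow> x \<in> V \<and> y \<in> V \<and> E y x \<and> x \<noteq> y)"

text \<open>A walk is a nonempty list of vertices, consecutive ones adjacent;
its length is the number of edges, i.e. length xs - 1.\<close>
definition walk :: "('a \<Rightarrow> 'a \<Rightarrow> bool) \<Rightarrow> 'a list \<Rightarrow> bool" where
  "walk E xs \<longleftrightarrow> xs \<noteq> [] \<and> (\<forall>i. Suc i < length xs \<longrightarrow> E (xs ! i) (xs ! Suc i))"

text \<open>Closed walk through v of length at most r (w.l.o.g. starting and ending at v).\<close>
definition closed_walk_at :: "('a \<Rightarrow> 'a \<Rightarrow> bool) \<Rightarrow> nat \<Rightarrow> 'a \<Rightarrow> 'a list \<Rightarrow> bool" where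
  "closed_walk_at E r v xs \<longleftrightarrow> walk E xs \<and> hd xs = v \<and> last xs = v \<and> length xs - 1 \<le> r"

definition ballV :: "('a \<Rightarrow> 'a \<Rightarrow> bool) \<Rightarrow> nat \<Rightarrow> 'a \<Rightarrow> 'a set" where
  "ballV E r v = {x. \<exists>xs. closed_walk_at E r v xs \<and> x \<in> set xs}"

definition ballE :: "('a \<Rightarrow> 'a \<Rightarrow> bool) \<Rightarrow> nat \<Rightarrow> 'a \<Rightarrow> 'a \<Rightarrow> 'a \<Rightarrow> bool" where
  "ballE E r v x y \<longleftrightarrow> (\<exists>xs i. closed_walk_at E r v xs \<and> Suc i < length xs \<and>
      ((xs ! i = x \<and> xs ! Suc i = y) \<or> (xs ! i = y \<and> xs ! Suc i = x)))"

definition same_comp :: "'a set \<Rightarrow> ('a \<Rightarrow> 'a \<Rightarrow> bool) \<Rightarrow> 'a \<Rightarrow> 'a \<Rightarrow> bool" where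
  "same_comp W F x y \<longleftrightarrow> x \<in> W \<and> y \<in> W \<and> (\<lambda>a b. a \<in> W \<and> b \<in> W \<and> F a b)\<^sup>*\<^sup>* x y"

definition disconnected :: "'a set \<Rightarrow> ('a \<Rightarrow> 'a \<Rightarrow> bool) \<Rightarrow> bool" where
  "disconnected W F \<longleftrightarrow> (\<exists>x\<in>W. \<exists>y\<in>W. \<not> same_comp W F x y)"

definition local_cutvertex :: "'a set \<Rightarrow> ('a \<Rightarrow> 'a \<Rightarrow> bool) \<Rightarrow> nat \<Rightarrow> 'a \<Rightarrow> bool" where
  "local_cutvertex V E r v \<longleftrightarrow> v \<in> V \<and> disconnected (ballV E r v - {v}) (ballE E r v)"

definition nbhd2 :: "'a set \<Rightarrow> ('a \<Rightarrow> 'a \<Rightarrow> bool) \<Rightarrow> 'a \<Rightarrow> 'a \<Rightarrow> 'a set" where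
  "nbhd2 V E v0 v1 = {x \<in> V - {v0, v1}. E x v0 \<or> E x v1}"

text \<open>Adjacency of the connectivity graph C_r(v0,v1) on vertex set N(X).\<close>
definition conn_adj :: "'a set \<Rightarrow> ('a \<Rightarrow> 'a \<Rightarrow> bool) \<Rightarrow> nat \<Rightarrow> 'a \<Rightarrow> 'a \<Rightarrow> 'a \<Rightarrow> 'a \<Rightarrow> bool" where
  "conn_adj V E r v0 v1 a b \<longleftrightarrow> a \<in> nbhd2 V E v0 v1 \<and> b \<in> nbhd2 V E v0 v1 \<and> a \<noteq> b \<and>
     (\<exists>w \<in> {v0, v1}. same_comp (ballV E r w - {v0, v1}) (ballE E r w) a b)"

definition dist_le :: "('a \<Rightarrow> 'a \<Rightarrow> bool) \<Rightarrow> 'a \<Rightarrow> 'a \<Rightarrow> nat \<Rightarrow> bool" where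
  "dist_le E x y k \<longleftrightarrow> (\<exists>xs. walk E xs \<and> hd xs = x \<and> last xs = y \<and> length xs - 1 \<le> k)"

definition local_2_separator :: "'a set \<Rightarrow> ('a \<Rightarrow> 'a \<Rightarrow> bool) \<Rightarrow> nat \<Rightarrow> 'a \<Rightarrow> 'a \<Rightarrow> bool" where
  "local_2_separator V E r v0 v1 \<longleftrightarrow> v0 \<in> V \<and> v1 \<in> V \<and> v0 \<noteq> v1 \<and>
     disconnected (nbhd2 V E v0 v1) (conn_adj V E r v0 v1) \<and>
     (\<exists>k. 2 * k \<le> r \<and> dist_le E v0 v1 k)"

definition local_2_separation :: "'a set \<Rightarrow> ('a \<Rightarrow> 'a \<Rightarrow> bool) \<Rightarrow> nat \<Rightarrow> 'a set \<Rightarrow> 'a set \<Rightarrow> 'a \<Rightarrow> 'a \<Rightarrow> bool" where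
  "local_2_separation V E r A B v0 v1 \<longleftrightarrow>
     local_2_separator V E r v0 v1 \<and>
     A \<inter> B = {v0, v1} \<and>
     A \<union> B = {v0, v1} \<union> nbhd2 V E v0 v1 \<and>
     A - {v0, v1} \<noteq> {} \<and> B - {v0, v1} \<noteq> {} \<and>
     (\<forall>x \<in> nbhd2 V E v0 v1. \<forall>y \<in> nbhd2 V E v0 v1.
        same_comp (nbhd2 V E v0 v1) (conn_adj V E r v0 v1) x y \<longrightarrow> (x \<in> A \<longleftrightarrow> y \<in> A))"

end

theory Submission
  imports Defs
begin

text \<open>A vertex \<open>x \<noteq> v\<close> of \<open>B \<inter> B'\<close> lies in \<open>N(a', v) \<inter> N(a, v)\<close>, hence in \<open>B\<^sub>r(v)\<close>:
either it is a neighbour of \<open>v\<close>, or \<open>v a x a' v\<close> is a closed walk of length \<open>4 \<le> r\<close>.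
As \<open>v\<close> is not an \<open>r\<close>-local cutvertex, \<open>x\<close> is joined to \<open>a\<close> in \<open>B\<^sub>r(v) - v\<close>. Stopping such
a path at its first vertex in \<open>{a, a'}\<close> joins \<open>x\<close> to \<open>a\<close> in \<open>B\<^sub>r(v) - {a', v}\<close> or to \<open>a'\<close> in
\<open>B\<^sub>r(v) - {a, v}\<close>. Either way \<open>x\<close> is adjacent in a connectivity graph to a vertex on the
other side of the corresponding separation, which is impossible.\<close>

lemma walk_Cons2: "walk E (x # y # xs) \<longleftrightarrow> E x y \<and> walk E (y # xs)"
  unfolding walk_def by (auto simp: nth_Cons split: nat.splits)

lemma walk_singleton: "walk E [x]"
  by (simp add: walk_def)

lemma closed_walk_at_subset_ballV: "closed_walk_at E r v xs \<Longrightarrow> set xs \<subseteq> ballV E r v"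
  unfolding ballV_def by blast

lemma neighbour_in_ballV:
  assumes "graph V E" "E x v" "2 \<le> r"
  shows "x \<in> ballV E r v"
proof -
  have "E v x" using assms(1,2) unfolding graph_def by blast
  then have "closed_walk_at E r v [v, x, v]"
    using assms(2,3) by (simp add: closed_walk_at_def walk_Cons2 walk_singleton)
  then show ?thesis using closed_walk_at_subset_ballV by fastforce
qed

lemma common_nbhd2_in_ballV:
  assumes "graph V E" "E a v" "E a' v" "4 \<le> r"
    and "x \<in> nbhd2 V E a v" "x \<in> nbhd2 V E a' v"
  shows "x \<in> ballV E r v"
proof (cases "E x v")
  case True
  then show ?thesis using assms(1,4) neighbour_in_ballV by fastforce
next
  case False
  then have "E x a" "E x a'" using assms(5,6) unfolding nbhd2_def by auto
  moreover have "E v a" "E a x" using assms(1,2) \<open>E x a\<close> unfolding graph_def by blast+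
  ultimately have "closed_walk_at E r v [v, a, x, a', v]"
    using assms(3,4) by (simp add: closed_walk_at_def walk_Cons2 walk_singleton)
  then show ?thesis using closed_walk_at_subset_ballV by fastforce
qed

lemma same_comp_first_hit:
  assumes "same_comp W F x y" "y \<in> T" "x \<notin> T"
  shows "\<exists>z\<in>T. same_comp (W - (T - {z})) F x z"
proof -
  have "(\<lambda>p q. p \<in> W \<and> q \<in> W \<and> F p q)\<^sup>*\<^sup>* x y"
    using assms(1) unfolding same_comp_def by blast
  then show ?thesis using assms(2,3)
  proof (induction rule: converse_rtranclp_induct)
    case base
    then show ?case by blast
  next
    case (step x x')
    show ?case
    proof (cases "x' \<in> T")
      case True
      then have "same_comp (W - (T - {x'})) F x x'"
        using step.hyps(1) step.prems(2) unfolding same_comp_def by auto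
      then show ?thesis using True by blast
    next
      case False
      then obtain z where "z \<in> T" and z: "same_comp (W - (T - {z})) F x' z"
        using step.IH step.prems(1) by blast
      have "x \<in> W - (T - {z})" "x' \<in> W - (T - {z})"
        using step.hyps(1) step.prems(2) False by auto
      then have "same_comp (W - (T - {z})) F x z"
        using z step.hyps(1) unfolding same_comp_def
        by (auto intro: converse_rtranclp_into_rtranclp)
      then show ?thesis using \<open>z \<in> T\<close> by blast
    qed
  qed
qed

lemma same_comp_first_hit_pair:
  assumes "same_comp W F x a" "x \<notin> {a, a'}" "a \<noteq> a'"
  shows "same_comp (W - {a'}) F x a \<or> same_comp (W - {a}) F x a'"
proof -
  obtain z where "z \<in> {a, a'}" "same_comp (W - ({a, a'} - {z})) F x z"
    using same_comp_first_hit[OF assms(1) insertI1 assms(2)] by blast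
  moreover have "{a, a'} - {a} = {a'}" "{a, a'} - {a'} = {a}" using assms(3) by auto
  ultimately show ?thesis by (metis insertE singletonD)
qed

lemma local_2_separation_sides_not_same_comp:
  assumes "local_2_separation V E r A B v0 v1" "w \<in> {v0, v1}"
    and "y \<in> A - {v0, v1}" "x \<in> B - {v0, v1}"
  shows "\<not> same_comp (ballV E r w - {v0, v1}) (ballE E r w) x y"
proof
  assume comp: "same_comp (ballV E r w - {v0, v1}) (ballE E r w) x y"
  let ?N = "nbhd2 V E v0 v1"
  have "x \<in> ?N" "y \<in> ?N" "x \<noteq> y"
    using assms(1,3,4) unfolding local_2_separation_def by blast+
  then have "conn_adj V E r v0 v1 x y"
    using comp assms(2) unfolding conn_adj_def by blast
  then have "same_comp ?N (conn_adj V E r v0 v1) x y"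
    using \<open>x \<in> ?N\<close> \<open>y \<in> ?N\<close> unfolding same_comp_def by auto
  then have "x \<in> A"
    using assms(1,3) \<open>x \<in> ?N\<close> \<open>y \<in> ?N\<close> unfolding local_2_separation_def by blast
  then show False using assms(1,4) unfolding local_2_separation_def by blast
qed

theorem lemma5p11:
  fixes V :: "'a set" and E :: "'a \<Rightarrow> 'a \<Rightarrow> bool" and r :: nat
    and A B A' B' :: "'a set" and a a' v :: 'a
  assumes "graph V E"
    and "r \<ge> 4"
    and "local_2_separation V E r A B a' v" and "E a' v"
    and "local_2_separation V E r A' B' a v" and "E a v"
    and "a \<noteq> a'"
    and "a \<in> A" and "a' \<in> A'"
    and "\<not> local_cutvertex V E r v"
  shows "B \<inter> B' = {v}"
proof -
  have sep: "A \<inter> B = {a', v}" "A \<union> B = {a', v} \<union> nbhd2 V E a' v"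
    "A' \<inter> B' = {a, v}" "A' \<union> B' = {a, v} \<union> nbhd2 V E a v"
    using assms(3,5) by (simp_all add: local_2_separation_def)
  have "a \<noteq> v" "a' \<noteq> v" "v \<in> V" using assms(1,4,6) unfolding graph_def by blast+
  have "x = v" if "x \<in> B" "x \<in> B'" for x
  proof (rule ccontr)
    assume "x \<noteq> v"
    have "x \<notin> {a, a'}" using that sep(1,3) assms(7-9) \<open>a \<noteq> v\<close> \<open>a' \<noteq> v\<close> by auto
    have xN: "x \<in> nbhd2 V E a v" "x \<in> nbhd2 V E a' v"
      using that sep(2,4) \<open>x \<noteq> v\<close> \<open>x \<notin> {a, a'}\<close> by blast+
    let ?W = "ballV E r v - {v}"
    have "x \<in> ?W" using common_nbhd2_in_ballV[OF assms(1,6,4,2) xN] \<open>x \<noteq> v\<close> by blast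
    moreover have "a \<in> ?W" using neighbour_in_ballV[OF assms(1,6)] assms(2) \<open>a \<noteq> v\<close> by simp
    ultimately have "same_comp ?W (ballE E r v) x a"
      using assms(10) \<open>v \<in> V\<close> unfolding local_cutvertex_def disconnected_def by blast
    then have "same_comp (?W - {a'}) (ballE E r v) x a \<or> same_comp (?W - {a}) (ballE E r v) x a'"
      by (rule same_comp_first_hit_pair[OF _ \<open>x \<notin> {a, a'}\<close> assms(7)])
    moreover have "?W - {a'} = ballV E r v - {a', v}" "?W - {a} = ballV E r v - {a, v}" by auto
    moreover have "\<not> same_comp (ballV E r v - {a', v}) (ballE E r v) x a"
      by (rule local_2_separation_sides_not_same_comp[OF assms(3)])
        (use that assms(7,8) \<open>x \<noteq> v\<close> \<open>x \<notin> {a, a'}\<close> \<open>a \<noteq> v\<close> in auto)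
    moreover have "\<not> same_comp (ballV E r v - {a, v}) (ballE E r v) x a'"
      by (rule local_2_separation_sides_not_same_comp[OF assms(5)])
        (use that assms(7,9) \<open>x \<noteq> v\<close> \<open>x \<notin> {a, a'}\<close> \<open>a' \<noteq> v\<close> in auto)
    ultimately show False by simp
  qed
  then show ?thesis using sep(1,3) by blast
qed

end
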